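(* Assume the step size satisfies $$0<\alpha<\min\Big\{\frac{1+\lambda_{\min}(W)}{L_f},\ \frac{2}{L_f+m_f}\Big\}.$$ Let $\mathbf{x}^\ell\in\mathbb{R}^N$ and let $\mathbf{x}^{\ell+1} = \operatorname{prox}_{\alpha g}(W\mathbf{x}^\ell - \alpha\nabla f(\mathbf{x}^\ell))$ (exact DPGM step). With $\bar{\mathbf{x}}^\ell = \tfrac1N\mathbf{1}\mathbf{1}^\top\mathbf{x}^\ell$, $\bar{\mathbf{x}}^{\ell+1}=\tfrac1N\mathbf{1}\mathbf{1}^\top\mathbf{x}^{\ell+1}$, one has $$\|\bar{\mathbf{x}}^{\ell+1} - \mathbf{x}^*\| \le c\,\|\bar{\mathbf{x}}^\ell - \mathbf{x}^*\| + \alpha L_f\|\mathbf{x}^\ell - \bar{\mathbf{x}}^\ell\| + 2\alpha L_g,$$ where $c := \sqrt{1 - 2\alpha m_f L_f/(m_f+L_f)}\in(0,1)$.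
   Context: $N\ge2$; $W\in\mathbb{R}^{N\times N}$ is a symmetric doubly stochastic matrix (nonnegative entries, rows and columns summing to $1$) compatible with an undirected connected graph, with $\rho(W):=\|W-\tfrac1N\mathbf{1}\mathbf{1}^\top\|\in(0,1)$; $\lambda_{\min}(W)$ is its smallest eigenvalue. Each $f_i:\mathbb{R}\to\mathbb{R}$ is $L_{f_i}$-smooth and $m_{f_i}$-strongly convex, $f(\mathbf{x})=\sum_i f_i(x_i)$, $L_f=\max_i L_{f_i}$, $m_f=\min_i m_{f_i}$. Each $g_i:\mathbb{R}\to\mathbb{R}$ is closed, convex, proper and Lipschitz, $g(\mathbf{x})=\sum_i g_i(x_i)$, and $L_g\ge0$ is a constant such that $g$ is $L_g$-Lipschitz on $\mathbb{R}^N$ (Euclidean norm). $x^*\in\mathbb{R}$ is the unique minimizer of $x\mapsto\sum_{i=1}^N(f_i(x)+g_i(x))$ over $\mathbb{R}$, and $\mathbf{x}^* = x^*\mathbf{1}\in\mathbb{R}^N$ is the solution of $\min\sum_i (f_i(x_i)+g_i(x_i))$ subject to $x_i=x_j$ for all $(i,j)\in\mathcal{E}$. $\operatorname{prox}_{\alpha h}(\mathbf{y}) = \arg\min_{\mathbf{x}}\{h(\mathbf{x}) + \tfrac{1}{2\alpha}\|\mathbf{x}-\mathbf{y}\|^2\}$. *)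

theory Defs
  imports "HOL-Analysis.Analysis"
begin

definition avg_mat :: "real^'n^'n" where
  "avg_mat = (\<chi> i j. 1 / real CARD('n))"

definition prox :: "real \<Rightarrow> (real^'n \<Rightarrow> real) \<Rightarrow> real^'n \<Rightarrow> real^'n" where
  "prox a h y = (SOME x. \<forall>z. h x + (1 / (2 * a)) * (norm (x - y))\<^sup>2
                                \<le> h z + (1 / (2 * a)) * (norm (z - y))\<^sup>2)"

definition lambda_min :: "real^'n^'n \<Rightarrow> real" where
  "lambda_min W = Min {l. \<exists>v. v \<noteq> 0 \<and> W *v v = l *\<^sub>R v}"

definition rho :: "real^'n^'n \<Rightarrow> real" where
  "rho W = onorm (\<lambda>x. (W - avg_mat) *v x)"

end

theory Submission
  imports Defs
begin

(*
  Averaging commutes with a column-stochastic W, so the mean of the new iterate is the mean of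
  the old one moved by one gradient step of the averaged objective (1/N) sum_i f_i, up to three
  perturbations: the prox step moves its argument by at most alpha L_g; evaluating the gradients
  at x instead of at its mean costs alpha L_f ||x - mean x||; and optimality of x* for f + g only
  bounds the sum of the gradients at x* by sqrt N L_g instead of making it zero. In one
  dimension a gradient step for an m-strongly convex, L-smooth function contracts by c.
  Only the column sums of W and alpha (m_f + L_f) < 2 enter.
*)

definition vec_mean :: "real^'n \<Rightarrow> real" where
  "vec_mean v = (\<Sum>i\<in>UNIV. v $ i) / real CARD('n)"

lemma sum_abs_le_sqrt_card_norm:
  "(\<Sum>i\<in>UNIV. \<bar>(v::real^'n) $ i\<bar>) \<le> sqrt (real CARD('n)) * norm v"
  using L2_set_mult_ineq[of "\<lambda>i. \<bar>v $ i\<bar>" "\<lambda>_. 1" UNIV]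
  by (simp add: norm_vec_def L2_set_constant mult.commute)

lemma sqrt_card_mul_vec_mean_abs_le_norm:
  "sqrt (real CARD('n)) * vec_mean (\<chi> i. \<bar>(v::real^'n) $ i\<bar>) \<le> norm v"
proof -
  have "sqrt (real CARD('n)) * (\<Sum>i\<in>UNIV. \<bar>v $ i\<bar>)
      \<le> sqrt (real CARD('n)) * (sqrt (real CARD('n)) * norm v)"
    by (rule mult_left_mono[OF sum_abs_le_sqrt_card_norm]) simp
  thus ?thesis by (simp add: vec_mean_def field_simps)
qed

lemma vec_mean_mono: "(\<And>i. u $ i \<le> v $ i) \<Longrightarrow> vec_mean u \<le> vec_mean v"
  unfolding vec_mean_def by (intro divide_right_mono sum_mono) auto

lemma vec_mean_const [simp]: "vec_mean ((\<chi> i. c) :: real^'n) = c"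
  by (simp add: vec_mean_def)

lemma vec_mean_diff: "vec_mean (u - v) = vec_mean u - vec_mean v"
  by (simp add: vec_mean_def sum_subtractf diff_divide_distrib)

lemma vec_mean_scaleR: "vec_mean (a *\<^sub>R v) = a * vec_mean v"
  by (simp add: vec_mean_def sum_distrib_left)

lemma abs_vec_mean_le: "\<bar>vec_mean v\<bar> \<le> vec_mean (\<chi> i. \<bar>v $ i\<bar>)"
  unfolding vec_mean_def by (simp add: divide_right_mono sum_abs)

lemma sqrt_card_mul_abs_vec_mean_le_norm:
  "sqrt (real CARD('n)) * \<bar>vec_mean (v::real^'n)\<bar> \<le> norm v"
  by (rule order_trans[OF mult_left_mono[OF abs_vec_mean_le] sqrt_card_mul_vec_mean_abs_le_norm]) simp

lemma vec_lambda_diff_const: "(\<chi> i. a) - (\<chi> i. b) = (\<chi> i. a - b :: real^'n)"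
  by (simp add: vec_eq_iff)

lemma avg_mat_mult_eq: "avg_mat *v v = (\<chi> i. vec_mean v)"
  by (simp add: avg_mat_def vec_mean_def matrix_vector_mult_def sum_divide_distrib)

lemma norm_const_vec: "norm ((\<chi> i. c) :: real^'n) = sqrt (real CARD('n)) * \<bar>c\<bar>"
  by (simp add: norm_vec_def L2_set_constant)

lemma norm_avg_mat_mult_minus_const:
  "norm (avg_mat *v v - (\<chi> i. c) :: real^'n) = sqrt (real CARD('n)) * \<bar>vec_mean v - c\<bar>"
proof -
  have "avg_mat *v v - (\<chi> i. c) = (\<chi> i. vec_mean v - c :: real^'n)"
    by (simp add: avg_mat_mult_eq vec_eq_iff)
  thus ?thesis by (simp add: norm_const_vec)
qed

lemma vec_mean_matrix_vector_mult:
  fixes W :: "real^'n^'n"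
  assumes "\<forall>j. (\<Sum>i\<in>UNIV. W $ i $ j) = 1"
  shows "vec_mean (W *v x) = vec_mean x"
proof -
  have "(\<Sum>i\<in>UNIV. (W *v x) $ i) = (\<Sum>i\<in>UNIV. \<Sum>j\<in>UNIV. W $ i $ j * x $ j)"
    by (simp add: matrix_vector_mult_def)
  also have "\<dots> = (\<Sum>j\<in>UNIV. (\<Sum>i\<in>UNIV. W $ i $ j) * x $ j)"
    by (subst sum.swap) (simp add: sum_distrib_right)
  finally show ?thesis using assms by (simp add: vec_mean_def)
qed

lemma strongly_convex_deriv_monotone:
  fixes h h' :: "real \<Rightarrow> real"
  assumes "\<forall>y z. h z \<ge> h y + h' y * (z - y) + m / 2 * (z - y)\<^sup>2"
  shows "m * (z - y)\<^sup>2 \<le> (h' z - h' y) * (z - y)"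
proof -
  have "h z \<ge> h y + h' y * (z - y) + m / 2 * (z - y)\<^sup>2"
   and "h y \<ge> h z + h' z * (y - z) + m / 2 * (y - z)\<^sup>2"
    using assms by blast+
  thus ?thesis by (simp add: power2_eq_square algebra_simps)
qed

lemma gradient_step_contraction:
  fixes d e m L \<alpha> :: real
  assumes m: "0 < m" and mL: "m \<le> L" and \<alpha>: "0 < \<alpha>" and step: "\<alpha> * (m + L) \<le> 2"
    and strong: "m * e\<^sup>2 \<le> d * e" and lip: "\<bar>d\<bar> \<le> L * \<bar>e\<bar>"
  shows "\<bar>e - \<alpha> * d\<bar> \<le> sqrt (1 - 2 * \<alpha> * m * L / (m + L)) * \<bar>e\<bar>"
proof -
  have strong': "(m * e) * e \<le> d * e"
    using strong by (simp add: power2_eq_square mult.assoc)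
  \<comment> \<open>In one dimension the hypotheses place d between m e and L e; this replaces co-coercivity.\<close>
  have between: "(d - m * e) * (d - L * e) \<le> 0"
  proof (cases e "0 :: real" rule: linorder_cases)
    case less
    with strong' lip have "d \<le> m * e" "L * e \<le> d"
      by (simp_all add: mult_le_cancel_right abs_le_iff)
    thus ?thesis by (simp add: mult_nonpos_nonneg)
  next
    case equal
    thus ?thesis using lip by simp
  next
    case greater
    with strong' lip have "m * e \<le> d" "d \<le> L * e"
      by (simp_all add: mult_le_cancel_right abs_le_iff)
    thus ?thesis by (simp add: mult_nonneg_nonpos)
  qed
  define q where "q = 2 * m * L / (m + L)"
  have "\<alpha> * d\<^sup>2 \<le> 2 / (m + L) * d\<^sup>2"
    using step m mL by (intro mult_right_mono) (simp_all add: field_simps)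
  also have "\<dots> \<le> 2 / (m + L) * ((m + L) * d * e - m * L * e\<^sup>2)"
    using between m mL by (intro mult_left_mono) (simp_all add: power2_eq_square algebra_simps)
  also have "\<dots> = 2 * d * e - q * e\<^sup>2"
    using m mL unfolding q_def by (simp add: field_simps)
  finally have descent: "\<alpha> * d\<^sup>2 \<le> 2 * d * e - q * e\<^sup>2" .
  have "(e - \<alpha> * d)\<^sup>2 = e\<^sup>2 - 2 * \<alpha> * d * e + \<alpha> * (\<alpha> * d\<^sup>2)"
    by (simp add: power2_eq_square algebra_simps)
  also have "\<dots> \<le> e\<^sup>2 - 2 * \<alpha> * d * e + \<alpha> * (2 * d * e - q * e\<^sup>2)"
    using descent \<alpha> by simp
  also have "\<dots> = (1 - 2 * \<alpha> * m * L / (m + L)) * e\<^sup>2"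
    unfolding q_def by (simp add: algebra_simps)
  finally have "sqrt ((e - \<alpha> * d)\<^sup>2) \<le> sqrt ((1 - 2 * \<alpha> * m * L / (m + L)) * e\<^sup>2)"
    by (rule real_sqrt_le_mono)
  thus ?thesis by (simp add: real_sqrt_mult)
qed

lemma gradient_step_factor_bounds:
  fixes m L \<alpha> :: real
  assumes "0 < m" "m \<le> L" "0 < \<alpha>" "\<alpha> * (m + L) < 2"
  shows "0 < 1 - 2 * \<alpha> * m * L / (m + L)" "1 - 2 * \<alpha> * m * L / (m + L) < 1"
proof -
  have "2 * \<alpha> * m * L = (\<alpha> * (m + L)) * (2 * m * L) / (m + L)"
    using assms by (simp add: field_simps)
  also have "\<dots> < 2 * (2 * m * L) / (m + L)"
    using assms by (intro divide_strict_right_mono mult_strict_right_mono) auto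
  also have "\<dots> \<le> m + L"
    using assms zero_le_power2[of "m - L"] by (simp add: field_simps power2_eq_square)
  finally show "0 < 1 - 2 * \<alpha> * m * L / (m + L)"
    using assms by (simp add: field_simps)
  show "1 - 2 * \<alpha> * m * L / (m + L) < 1"
    using assms by simp
qed

lemma abs_deriv_le_of_lower_bound:
  fixes F :: "real \<Rightarrow> real"
  assumes D: "(F has_real_derivative S) (at x)" and lb: "\<forall>y. F x - K * \<bar>y - x\<bar> \<le> F y"
  shows "\<bar>S\<bar> \<le> K"
proof -
  have lim: "((\<lambda>y. (F y - F x) / (y - x)) \<longlongrightarrow> S) (at x)"
    using D by (simp add: has_field_derivative_iff)
  have "- K \<le> S"
  proof (rule tendsto_lowerbound)
    show "((\<lambda>y. (F y - F x) / (y - x)) \<longlongrightarrow> S) (at_right x)"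
      using lim by (rule filterlim_mono) (simp_all add: at_le)
    show "\<forall>\<^sub>F y in at_right x. - K \<le> (F y - F x) / (y - x)"
    proof (rule eventually_at_rightI[of x "x + 1"])
      fix y assume "y \<in> {x<..<x + 1}"
      with lb[rule_format, of y] show "- K \<le> (F y - F x) / (y - x)"
        by (simp add: field_simps)
    qed simp
  qed simp
  moreover have "S \<le> K"
  proof (rule tendsto_upperbound)
    show "((\<lambda>y. (F y - F x) / (y - x)) \<longlongrightarrow> S) (at_left x)"
      using lim by (rule filterlim_mono) (simp_all add: at_le)
    show "\<forall>\<^sub>F y in at_left x. (F y - F x) / (y - x) \<le> K"
    proof (rule eventually_at_leftI[of "x - 1"])
      fix y assume "y \<in> {x - 1<..<x}"
      with lb[rule_format, of y] show "(F y - F x) / (y - x) \<le> K"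
        by (simp add: field_simps)
    qed simp
  qed simp
  ultimately show ?thesis by simp
qed

lemma prox_minimizer_exists:
  fixes G :: "'a::euclidean_space \<Rightarrow> real"
  assumes Lg: "0 \<le> Lg" and lip: "\<forall>u v. \<bar>G u - G v\<bar> \<le> Lg * norm (u - v)" and a: "0 < a"
  shows "\<exists>x. \<forall>z. G x + 1 / (2 * a) * (norm (x - y))\<^sup>2
                     \<le> G z + 1 / (2 * a) * (norm (z - y))\<^sup>2"
proof -
  define \<phi> where "\<phi> z = G z + 1 / (2 * a) * (norm (z - y))\<^sup>2" for z
  have "Lg-lipschitz_on UNIV G"
    unfolding lipschitz_on_def using Lg lip by (simp add: dist_norm)
  hence "continuous_on UNIV G" by (rule lipschitz_on_continuous_on)
  hence "continuous_on UNIV \<phi>"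
    unfolding \<phi>_def by (intro continuous_intros)
  hence "continuous_on (cball y (2 * a * Lg)) \<phi>"
    by (rule continuous_on_subset) simp
  moreover have "cball y (2 * a * Lg) \<noteq> {}"
    using Lg a by (simp add: not_less)
  ultimately obtain x where x: "x \<in> cball y (2 * a * Lg)"
    and x_min: "\<And>z. z \<in> cball y (2 * a * Lg) \<Longrightarrow> \<phi> x \<le> \<phi> z"
    using continuous_attains_inf[of "cball y (2 * a * Lg)" \<phi>] by auto
  \<comment> \<open>Far from y the quadratic term outgrows the Lipschitz decrease of G.\<close>
  have "\<phi> x \<le> \<phi> z" for z
  proof (cases "z \<in> cball y (2 * a * Lg)")
    case False
    hence far: "2 * a * Lg \<le> norm (z - y)"
      by (simp add: dist_norm norm_minus_commute)
    have "2 * a * (Lg * norm (z - y)) \<le> norm (z - y) * norm (z - y)"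
      using mult_right_mono[OF far norm_ge_zero] by (simp add: mult.assoc)
    hence "Lg * norm (z - y) \<le> 1 / (2 * a) * (norm (z - y))\<^sup>2"
      using a by (simp add: field_simps power2_eq_square)
    moreover have "G y \<le> G z + Lg * norm (z - y)"
      using lip[rule_format, of y z] by (simp add: norm_minus_commute)
    ultimately have "\<phi> y \<le> \<phi> z"
      unfolding \<phi>_def by simp
    moreover have "\<phi> x \<le> \<phi> y"
      using x_min[of y] Lg a by simp
    ultimately show ?thesis by simp
  qed (use x_min in auto)
  thus ?thesis unfolding \<phi>_def by blast
qed

lemma prox_minimizer_near:
  fixes G :: "'a::euclidean_space \<Rightarrow> real"
  assumes Lg: "0 \<le> Lg" and lip: "\<forall>u v. \<bar>G u - G v\<bar> \<le> Lg * norm (u - v)" and a: "0 < a"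
    and min: "\<forall>z. G x + 1 / (2 * a) * (norm (x - y))\<^sup>2
                  \<le> G z + 1 / (2 * a) * (norm (z - y))\<^sup>2"
  shows "norm (x - y) \<le> a * Lg"
proof (rule ccontr)
  define d where "d = norm (x - y)"
  assume "\<not> norm (x - y) \<le> a * Lg"
  hence far: "a * Lg < d" unfolding d_def by simp
  moreover have "0 \<le> a * Lg" using Lg a by simp
  ultimately have d_pos: "0 < d" by linarith
  \<comment> \<open>Compare x with the point z at distance a Lg from y on the segment towards x.\<close>
  define s where "s = a * Lg / d"
  define z where "z = y + s *\<^sub>R (x - y)"
  have s: "0 \<le> s" "s < 1" using far d_pos Lg a unfolding s_def by auto
  have zy: "norm (z - y) = a * Lg"
    using d_pos s Lg a unfolding z_def s_def d_def by simp
  have "z - x = (1 - s) *\<^sub>R (y - x)" unfolding z_def by (simp add: algebra_simps)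
  hence "norm (z - x) = (1 - s) * d"
    using s by (simp add: d_def norm_minus_commute)
  also have "(1 - s) * d = d - a * Lg"
    using d_pos unfolding s_def by (simp add: field_simps)
  finally have zx: "norm (z - x) = d - a * Lg" .
  have "G z \<le> G x + Lg * norm (z - x)" using lip[rule_format, of z x] by simp
  with min[rule_format, of z] zy zx
  have "1 / (2 * a) * d\<^sup>2 \<le> Lg * (d - a * Lg) + 1 / (2 * a) * (a * Lg)\<^sup>2"
    unfolding d_def by simp
  hence "d\<^sup>2 \<le> 2 * a * Lg * (d - a * Lg) + (a * Lg)\<^sup>2" using a by (simp add: field_simps)
  hence "(d - a * Lg)\<^sup>2 \<le> 0" by (simp add: power2_eq_square algebra_simps)
  thus False using far by simp
qed

lemma norm_prox_minus_le:
  fixes G :: "real^'n \<Rightarrow> real"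
  assumes "0 \<le> Lg" and "\<forall>u v. \<bar>G u - G v\<bar> \<le> Lg * norm (u - v)" and "0 < a"
  shows "norm (prox a G y - y) \<le> a * Lg"
  unfolding prox_def
  by (rule prox_minimizer_near[OF assms someI_ex[OF prox_minimizer_exists[OF assms]]])

lemma vec_mean_deriv_strongly_monotone:
  fixes f' :: "'n::finite \<Rightarrow> real \<Rightarrow> real"
  assumes "\<forall>i y z. m * (z - y)\<^sup>2 \<le> (f' i z - f' i y) * (z - y)"
  shows "m * (z - y)\<^sup>2 \<le> (vec_mean (\<chi> i. f' i z) - vec_mean (\<chi> i. f' i y)) * (z - y)"
proof -
  have "m * (z - y)\<^sup>2 = vec_mean ((\<chi> i. m * (z - y)\<^sup>2) :: real^'n)" by simp
  also have "\<dots> \<le> vec_mean (\<chi> i. (f' i z - f' i y) * (z - y))"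
    using assms by (intro vec_mean_mono) simp
  also have "\<dots> = (\<Sum>i\<in>UNIV. f' i z - f' i y) * (z - y) / real CARD('n)"
    by (simp add: vec_mean_def sum_distrib_right)
  also have "\<dots> = (vec_mean (\<chi> i. f' i z) - vec_mean (\<chi> i. f' i y)) * (z - y)"
    by (simp add: vec_mean_def sum_subtractf field_simps)
  finally show ?thesis .
qed

lemma vec_mean_gradient_lipschitz:
  fixes f' :: "'n::finite \<Rightarrow> real \<Rightarrow> real" and x y :: "real^'n"
  assumes lip: "\<forall>i y z. \<bar>f' i y - f' i z\<bar> \<le> L * \<bar>y - z\<bar>"
  shows "sqrt (real CARD('n)) * \<bar>vec_mean (\<chi> i. f' i (x $ i)) - vec_mean (\<chi> i. f' i (y $ i))\<bar>
           \<le> L * norm (x - y)"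
proof -
  have L: "0 \<le> L"
    using lip[rule_format, of undefined 1 0] abs_ge_zero[of "f' undefined 1 - f' undefined 0"] by simp
  have "\<bar>vec_mean (\<chi> i. f' i (x $ i)) - vec_mean (\<chi> i. f' i (y $ i))\<bar>
      \<le> vec_mean (\<chi> i. \<bar>f' i (x $ i) - f' i (y $ i)\<bar>)"
    using abs_vec_mean_le[of "(\<chi> i. f' i (x $ i)) - (\<chi> i. f' i (y $ i))"]
    by (simp add: vec_mean_diff)
  also have "\<dots> \<le> vec_mean (\<chi> i. L * \<bar>(x - y) $ i\<bar>)"
    using lip by (intro vec_mean_mono) simp
  also have "\<dots> = L * vec_mean (\<chi> i. \<bar>(x - y) $ i\<bar>)"
    by (simp add: vec_mean_def sum_distrib_left)
  finally have "sqrt (real CARD('n)) * \<bar>vec_mean (\<chi> i. f' i (x $ i)) - vec_mean (\<chi> i. f' i (y $ i))\<bar>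
      \<le> sqrt (real CARD('n)) * (L * vec_mean (\<chi> i. \<bar>(x - y) $ i\<bar>))"
    by (rule mult_left_mono) simp
  also have "\<dots> = L * (sqrt (real CARD('n)) * vec_mean (\<chi> i. \<bar>(x - y) $ i\<bar>))"
    by (rule mult.left_commute)
  also have "\<dots> \<le> L * norm (x - y)"
    using L by (intro mult_left_mono sqrt_card_mul_vec_mean_abs_le_norm)
  finally show ?thesis .
qed

lemma abs_sum_deriv_le_at_consensus_minimizer:
  fixes f f' :: "'n::finite \<Rightarrow> real \<Rightarrow> real" and G :: "real^'n \<Rightarrow> real"
  assumes deriv: "\<forall>i y. (f i has_real_derivative f' i y) (at y)"
    and lip: "\<forall>u v. \<bar>G u - G v\<bar> \<le> Lg * norm (u - v)"
    and min: "\<forall>t. (\<Sum>i\<in>UNIV. f i xstar) + G (\<chi> i. xstar)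
                  \<le> (\<Sum>i\<in>UNIV. f i t) + G (\<chi> i. t)"
  shows "\<bar>\<Sum>i\<in>UNIV. f' i xstar\<bar> \<le> sqrt (real CARD('n)) * Lg"
proof (rule abs_deriv_le_of_lower_bound)
  show "((\<lambda>t. \<Sum>i\<in>UNIV. f i t) has_real_derivative (\<Sum>i\<in>UNIV. f' i xstar)) (at xstar)"
    using deriv by (intro DERIV_sum) auto
  show "\<forall>t. (\<Sum>i\<in>UNIV. f i xstar) - sqrt (real CARD('n)) * Lg * \<bar>t - xstar\<bar>
             \<le> (\<Sum>i\<in>UNIV. f i t)"
  proof
    fix t
    have "G (\<chi> i. t) - G (\<chi> i. xstar) \<le> sqrt (real CARD('n)) * Lg * \<bar>t - xstar\<bar>"
      using lip[rule_format, of "\<chi> i. t" "\<chi> i. xstar"]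
      by (simp add: vec_lambda_diff_const norm_const_vec algebra_simps)
    thus "(\<Sum>i\<in>UNIV. f i xstar) - sqrt (real CARD('n)) * Lg * \<bar>t - xstar\<bar>
            \<le> (\<Sum>i\<in>UNIV. f i t)"
      using min[rule_format, of t] by linarith
  qed
qed

lemma deriv_lipschitz_Max:
  fixes f' :: "'n::finite \<Rightarrow> real \<Rightarrow> real"
  assumes "\<forall>i y z. \<bar>f' i y - f' i z\<bar> \<le> Lfi i * \<bar>y - z\<bar>"
  shows "\<forall>i y z. \<bar>f' i y - f' i z\<bar> \<le> Max (range Lfi) * \<bar>y - z\<bar>"
proof (intro allI)
  fix i y z
  have "\<bar>f' i y - f' i z\<bar> \<le> Lfi i * \<bar>y - z\<bar>" using assms by blast
  also have "\<dots> \<le> Max (range Lfi) * \<bar>y - z\<bar>" by (intro mult_right_mono) simp_all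
  finally show "\<bar>f' i y - f' i z\<bar> \<le> Max (range Lfi) * \<bar>y - z\<bar>" .
qed

lemma deriv_strongly_monotone_Min:
  fixes f f' :: "'n::finite \<Rightarrow> real \<Rightarrow> real"
  assumes "\<forall>i y z. f i z \<ge> f i y + f' i y * (z - y) + mfi i / 2 * (z - y)\<^sup>2"
  shows "\<forall>i y z. Min (range mfi) * (z - y)\<^sup>2 \<le> (f' i z - f' i y) * (z - y)"
proof (intro allI)
  fix i y z
  have "Min (range mfi) * (z - y)\<^sup>2 \<le> mfi i * (z - y)\<^sup>2" by (intro mult_right_mono) simp_all
  also have "\<dots> \<le> (f' i z - f' i y) * (z - y)"
    by (rule strongly_convex_deriv_monotone[of "f i"]) (use assms in blast)
  finally show "Min (range mfi) * (z - y)\<^sup>2 \<le> (f' i z - f' i y) * (z - y)" .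
qed

lemma dpgm_mean_error_bound:
  fixes W :: "real^'n^'n" and f' :: "'n \<Rightarrow> real \<Rightarrow> real" and x x' :: "real^'n"
  assumes cols: "\<forall>j. (\<Sum>i\<in>UNIV. W $ i $ j) = 1"
    and strong: "\<forall>i y z. m * (z - y)\<^sup>2 \<le> (f' i z - f' i y) * (z - y)"
    and lip: "\<forall>i y z. \<bar>f' i y - f' i z\<bar> \<le> L * \<bar>y - z\<bar>"
    and m: "0 < m" and mL: "m \<le> L" and \<alpha>: "0 < \<alpha>" and step: "\<alpha> * (m + L) \<le> 2"
    and stationary: "\<bar>\<Sum>i\<in>UNIV. f' i xstar\<bar> \<le> sqrt (real CARD('n)) * Lg"
    and near: "norm (x' - (W *v x - \<alpha> *\<^sub>R (\<chi> i. f' i (x $ i)))) \<le> \<alpha> * Lg"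
  shows "norm (avg_mat *v x' - (\<chi> i. xstar))
           \<le> sqrt (1 - 2 * \<alpha> * m * L / (m + L)) * norm (avg_mat *v x - (\<chi> i. xstar))
             + \<alpha> * L * norm (x - avg_mat *v x) + 2 * \<alpha> * Lg"
proof -
  define sN where "sN = sqrt (real CARD('n))"
  define c where "c = sqrt (1 - 2 * \<alpha> * m * L / (m + L))"
  define y where "y = W *v x - \<alpha> *\<^sub>R (\<chi> i. f' i (x $ i))"
  define a where "a = vec_mean x"
  define D where "D t = vec_mean ((\<chi> i. f' i t) :: real^'n)" for t
  have sN: "0 < sN" "sN * sN = real CARD('n)" unfolding sN_def by simp_all
  have "vec_mean y = a - \<alpha> * vec_mean (\<chi> i. f' i (x $ i))"
    unfolding y_def a_def by (simp add: vec_mean_diff vec_mean_scaleR vec_mean_matrix_vector_mult[OF cols])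
  hence split: "vec_mean x' - xstar = vec_mean (x' - y) + ((a - xstar) - \<alpha> * (D a - D xstar))
                  - \<alpha> * (vec_mean (\<chi> i. f' i (x $ i)) - D a) - \<alpha> * D xstar"
    by (simp add: vec_mean_diff algebra_simps)
  have prox_err: "sN * \<bar>vec_mean (x' - y)\<bar> \<le> \<alpha> * Lg"
    using sqrt_card_mul_abs_vec_mean_le_norm[of "x' - y"] near unfolding sN_def y_def by linarith
  have "sN * \<bar>D a - D xstar\<bar> \<le> L * (sN * \<bar>a - xstar\<bar>)"
    using vec_mean_gradient_lipschitz[OF lip, of "\<chi> i. a" "\<chi> i. xstar"]
    by (simp add: D_def sN_def vec_lambda_diff_const norm_const_vec)
  hence "\<bar>D a - D xstar\<bar> \<le> L * \<bar>a - xstar\<bar>"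
    using sN by (simp add: mult.left_commute)
  with vec_mean_deriv_strongly_monotone[OF strong, of a xstar]
  have descent: "\<bar>(a - xstar) - \<alpha> * (D a - D xstar)\<bar> \<le> c * \<bar>a - xstar\<bar>"
    unfolding c_def D_def by (intro gradient_step_contraction[OF m mL \<alpha> step])
  have "sN * \<bar>vec_mean (\<chi> i. f' i (x $ i)) - D a\<bar> \<le> L * norm (x - avg_mat *v x)"
    using vec_mean_gradient_lipschitz[OF lip, of x "\<chi> i. a"]
    by (simp add: D_def sN_def a_def avg_mat_mult_eq)
  hence consensus: "sN * (\<alpha> * \<bar>vec_mean (\<chi> i. f' i (x $ i)) - D a\<bar>)
                      \<le> \<alpha> * L * norm (x - avg_mat *v x)"
    using \<alpha> by (simp add: mult.left_commute mult.assoc)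
  have "sN * \<bar>D xstar\<bar> = \<bar>\<Sum>i\<in>UNIV. f' i xstar\<bar> / sN"
    using sN by (simp add: D_def vec_mean_def abs_divide field_simps)
  hence optimum: "sN * (\<alpha> * \<bar>D xstar\<bar>) \<le> \<alpha> * Lg"
    using stationary sN \<alpha> by (simp add: mult.left_commute divide_le_eq sN_def mult.commute)
  have "norm (avg_mat *v x' - (\<chi> i. xstar)) = sN * \<bar>vec_mean x' - xstar\<bar>"
    by (simp add: norm_avg_mat_mult_minus_const sN_def)
  also have "\<dots> \<le> sN * \<bar>vec_mean (x' - y)\<bar> + sN * \<bar>(a - xstar) - \<alpha> * (D a - D xstar)\<bar>
      + sN * (\<alpha> * \<bar>vec_mean (\<chi> i. f' i (x $ i)) - D a\<bar>) + sN * (\<alpha> * \<bar>D xstar\<bar>)"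
    unfolding split distrib_left[symmetric] using sN \<alpha>
    by (intro mult_left_mono) (auto simp: abs_mult intro!: order_trans[OF abs_triangle_ineq4])
  also have "\<dots> \<le> \<alpha> * Lg + c * (sN * \<bar>a - xstar\<bar>)
                    + \<alpha> * L * norm (x - avg_mat *v x) + \<alpha> * Lg"
  proof -
    have "sN * \<bar>(a - xstar) - \<alpha> * (D a - D xstar)\<bar> \<le> c * (sN * \<bar>a - xstar\<bar>)"
      using mult_left_mono[OF descent less_imp_le[OF sN(1)]] by (simp only: mult.left_commute)
    thus ?thesis using prox_err consensus optimum by linarith
  qed
  also have "sN * \<bar>a - xstar\<bar> = norm (avg_mat *v x - (\<chi> i. xstar))"
    by (simp add: norm_avg_mat_mult_minus_const sN_def a_def)
  finally show ?thesis unfolding c_def by (simp add: algebra_simps)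
qed

theorem lemma6:
  fixes W :: "real^'n^'n"
    and E :: "'n \<Rightarrow> 'n \<Rightarrow> bool"
    and f f' g :: "'n \<Rightarrow> real \<Rightarrow> real"
    and Lfi mfi :: "'n \<Rightarrow> real"
    and Lg xstar \<alpha> :: real
    and x x' :: "real^'n"
  assumes N2: "CARD('n) \<ge> 2"
    and E_sym: "\<forall>i j. E i j \<longrightarrow> E j i"
    and E_irrefl: "\<forall>i. \<not> E i i"
    and E_conn: "\<forall>i j. E\<^sup>*\<^sup>* i j"
    and W_sym: "transpose W = W"
    and W_nonneg: "\<forall>i j. W $ i $ j \<ge> 0"
    and W_rows: "\<forall>i. (\<Sum>j\<in>UNIV. W $ i $ j) = 1"
    and W_cols: "\<forall>j. (\<Sum>i\<in>UNIV. W $ i $ j) = 1"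
    and W_graph: "\<forall>i j. i \<noteq> j \<longrightarrow> (W $ i $ j > 0 \<longleftrightarrow> E i j)"
    and rho_pos: "0 < rho W" and rho_lt1: "rho W < 1"
    and f_deriv: "\<forall>i y. (f i has_real_derivative f' i y) (at y)"
    and f_smooth: "\<forall>i y z. \<bar>f' i y - f' i z\<bar> \<le> Lfi i * \<bar>y - z\<bar>"
    and mfi_pos: "\<forall>i. mfi i > 0"
    and f_strong: "\<forall>i y z. f i z \<ge> f i y + f' i y * (z - y) + mfi i / 2 * (z - y)\<^sup>2"
    and g_convex: "\<forall>i. convex_on UNIV (g i)"
    and g_lip: "\<forall>i. \<exists>K. \<forall>y z. \<bar>g i y - g i z\<bar> \<le> K * \<bar>y - z\<bar>"
    and Lg_nonneg: "Lg \<ge> 0"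
    and Lg_lip: "\<forall>y z :: real^'n. \<bar>(\<Sum>i\<in>UNIV. g i (y $ i)) - (\<Sum>i\<in>UNIV. g i (z $ i))\<bar>
                     \<le> Lg * norm (y - z)"
    and xstar_min: "\<forall>y. (\<Sum>i\<in>UNIV. f i xstar + g i xstar) \<le> (\<Sum>i\<in>UNIV. f i y + g i y)"
    and xstar_unique: "\<forall>y. (\<Sum>i\<in>UNIV. f i y + g i y) \<le> (\<Sum>i\<in>UNIV. f i xstar + g i xstar)
                         \<longrightarrow> y = xstar"
    and alpha_pos: "0 < \<alpha>"
    and alpha_lt: "\<alpha> < min ((1 + lambda_min W) / Max (range Lfi))
                            (2 / (Max (range Lfi) + Min (range mfi)))"
    and step: "x' = prox \<alpha> (\<lambda>y. \<Sum>i\<in>UNIV. g i (y $ i))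
                  (W *v x - \<alpha> *\<^sub>R (\<chi> i. f' i (x $ i)))"
  shows "let Lf = Max (range Lfi); mf = Min (range mfi);
             c = sqrt (1 - 2 * \<alpha> * mf * Lf / (mf + Lf));
             xs = (\<chi> i. xstar) :: real^'n
         in 0 < c \<and> c < 1 \<and>
            norm (avg_mat *v x' - xs)
              \<le> c * norm (avg_mat *v x - xs) + \<alpha> * Lf * norm (x - avg_mat *v x) + 2 * \<alpha> * Lg"
proof -
  define Lf where "Lf = Max (range Lfi)"
  define mf where "mf = Min (range mfi)"
  have strong: "\<forall>i y z. mf * (z - y)\<^sup>2 \<le> (f' i z - f' i y) * (z - y)"
    unfolding mf_def by (rule deriv_strongly_monotone_Min[OF f_strong])
  have lip: "\<forall>i y z. \<bar>f' i y - f' i z\<bar> \<le> Lf * \<bar>y - z\<bar>"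
    unfolding Lf_def by (rule deriv_lipschitz_Max[OF f_smooth])
  have "mf \<in> range mfi" unfolding mf_def by (rule Min_in) simp_all
  hence mf_pos: "0 < mf" using mfi_pos by auto
  have mf_le_Lf: "mf \<le> Lf"
    using strong[rule_format, where i = undefined and y = 0 and z = 1]
      lip[rule_format, where i = undefined and y = 1 and z = 0]
    by (simp add: abs_le_iff)
  have step_size: "\<alpha> * (mf + Lf) < 2"
    using alpha_lt mf_pos mf_le_Lf by (simp add: Lf_def[symmetric] mf_def[symmetric] field_simps)
  have stationary: "\<bar>\<Sum>i\<in>UNIV. f' i xstar\<bar> \<le> sqrt (real CARD('n)) * Lg"
    using f_deriv Lg_lip xstar_min
    by (intro abs_sum_deriv_le_at_consensus_minimizer[where G = "\<lambda>y. \<Sum>i\<in>UNIV. g i (y $ i)"])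
       (simp_all add: sum.distrib)
  have near: "norm (x' - (W *v x - \<alpha> *\<^sub>R (\<chi> i. f' i (x $ i)))) \<le> \<alpha> * Lg"
    unfolding step by (rule norm_prox_minus_le[OF Lg_nonneg Lg_lip alpha_pos])
  show ?thesis
    using dpgm_mean_error_bound[OF W_cols strong lip mf_pos mf_le_Lf alpha_pos
                                 less_imp_le[OF step_size] stationary near]
      gradient_step_factor_bounds[OF mf_pos mf_le_Lf alpha_pos step_size]
    unfolding Let_def Lf_def[symmetric] mf_def[symmetric] by simp
qed

end
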